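(* Let $r\ge2$ be an integer and let $\theta\in C_p(\mathbb{R})$ satisfy $\theta(x)=x^2$ for $x\in[0,\frac1r]$, $\theta\in C^2(\mathbb{R})$, and $\theta>0$ on $(0,1)$. Then $\Delta_{n,0}(\tfrac1r;U_\theta)=-\frac{2}{r-1}$ for every $n\in\mathbb{N}_0$. Consequently $U_\theta\notin\mathcal{P}$.
   Context: $C_p(\mathbb{R})$ denotes the set of all continuous functions $f:\mathbb{R}\to\mathbb{R}$ periodic with period $1$ with $f(0)=0$; $\mathbb{N}_0=\mathbb{N}\cup\{0\}$. For $\psi\in C_p(\mathbb{R})$, $U_\psi(x)=\sum_{j=0}^\infty r^{-j}\psi(r^jx)$. For $f\in C_p(\mathbb{R})$ and $(n,k,y)\in\mathbb{N}_0\times\mathbb{Z}\times(0,1)$: $\delta^+_{n,k}(y;f)=\dfrac{f(\frac{k+1}{r^n})-f(\frac{k+y}{r^n})}{\frac{1-y}{r^n}}$, $\delta^-_{n,k}(y;f)=\dfrac{f(\frac{k+y}{r^n})-f(\frac{k}{r^n})}{\frac{y}{r^n}}$, $\Delta_{n,k}(y;f)=2r^n(\delta^+_{n,k}(y;f)-\delta^-_{n,k}(y;f))$. For $c>0$, $\mathcal{P}_c$ is the set of $f\in C_p(\mathbb{R})$ with $\delta^+_{n,k}(y;f)-\delta^-_{n,k}(y;f)\le-c$ for all $(n,k,y)\in\mathbb{N}_0\times\mathbb{Z}\times(0,1)$, and $\mathcal{P}=\bigcup_{c>0}\mathcal{P}_c$. *)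

theory Defs
  imports "HOL-Analysis.Analysis"
begin

definition Cp :: "(real \<Rightarrow> real) set" where
  "Cp = {f. continuous_on UNIV f \<and> (\<forall>x. f (x + 1) = f x) \<and> f 0 = 0}"

definition U :: "nat \<Rightarrow> (real \<Rightarrow> real) \<Rightarrow> real \<Rightarrow> real" where
  "U r \<psi> x = (\<Sum>j. \<psi> (real r ^ j * x) / real r ^ j)"

definition delta_plus :: "nat \<Rightarrow> nat \<Rightarrow> int \<Rightarrow> real \<Rightarrow> (real \<Rightarrow> real) \<Rightarrow> real" where
  "delta_plus r n k y f =
     (f ((real_of_int k + 1) / real r ^ n) - f ((real_of_int k + y) / real r ^ n))
       / ((1 - y) / real r ^ n)"

definition delta_minus :: "nat \<Rightarrow> nat \<Rightarrow> int \<Rightarrow> real \<Rightarrow> (real \<Rightarrow> real) \<Rightarrow> real" where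
  "delta_minus r n k y f =
     (f ((real_of_int k + y) / real r ^ n) - f (real_of_int k / real r ^ n))
       / (y / real r ^ n)"

definition Delta :: "nat \<Rightarrow> nat \<Rightarrow> int \<Rightarrow> real \<Rightarrow> (real \<Rightarrow> real) \<Rightarrow> real" where
  "Delta r n k y f = 2 * real r ^ n * (delta_plus r n k y f - delta_minus r n k y f)"

definition Pc :: "nat \<Rightarrow> real \<Rightarrow> (real \<Rightarrow> real) set" where
  "Pc r c = {f \<in> Cp. \<forall>n k y. 0 < y \<and> y < 1 \<longrightarrow>
                 delta_plus r n k y f - delta_minus r n k y f \<le> - c}"

definition P :: "nat \<Rightarrow> (real \<Rightarrow> real) set" where
  "P r = (\<Union>c\<in>{c. c > 0}. Pc r c)"

end

theory Submission
  imports Defs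
begin

(* At the grid points x = r^-n only the terms j < n of U_theta survive (theta vanishes at integers),
   and they all fall into [0, 1/r], where theta is a square; summing the geometric series gives
   U_theta(x) = (x - x^2)/(r - 1) at these points and at 0.  A quadratic with leading coefficient b
   has second difference 2b on every interval, so Delta_{n,0}(1/r; U_theta) = -2/(r - 1), while
   the unnormalised difference delta+ - delta- = -r^-n/(r - 1) tends to 0 and admits no bound -c. *)

lemma Cp_of_nat_eq_0:
  assumes "\<theta> \<in> Cp"
  shows "\<theta> (real m) = 0"
proof (induction m)
  case 0
  then show ?case using assms by (simp add: Cp_def)
next
  case (Suc m)
  have "\<theta> (real m + 1) = \<theta> (real m)" using assms by (simp add: Cp_def)
  then show ?case using Suc by (simp add: add.commute)
qed

lemma U_inverse_power:
  fixes r :: nat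
  assumes r: "r \<ge> 2" and \<theta>: "\<theta> \<in> Cp"
    and square: "\<forall>x\<in>{0..1 / real r}. \<theta> x = x\<^sup>2"
  shows "U r \<theta> (1 / real r ^ n) = (1 / real r ^ n - (1 / real r ^ n)\<^sup>2) / (real r - 1)"
proof -
  have r_pos: "real r > 0" using r by simp
  have vanish: "\<theta> (real r ^ j * (1 / real r ^ n)) / real r ^ j = 0" if "j \<ge> n" for j
  proof -
    have "real r ^ j * (1 / real r ^ n) = real r ^ (j - n)"
      using that r_pos by (simp add: power_diff)
    also have "\<dots> = real (r ^ (j - n))" by simp
    finally show ?thesis using Cp_of_nat_eq_0[OF \<theta>, of "r ^ (j - n)"] by simp
  qed
  have summand: "\<theta> (real r ^ j * (1 / real r ^ n)) / real r ^ j = real r ^ j / (real r ^ n)\<^sup>2"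
    if "j < n" for j
  proof -
    have "real r ^ j * (1 / real r ^ n) = 1 / real r ^ (n - j)"
      using that r_pos by (simp add: power_diff)
    also have "\<dots> \<le> 1 / real r"
      using that r by (intro divide_left_mono) (auto intro: self_le_power)
    finally have "\<theta> (real r ^ j * (1 / real r ^ n)) = (real r ^ j * (1 / real r ^ n))\<^sup>2"
      using square r_pos by auto
    then show ?thesis using r_pos by (simp add: power2_eq_square)
  qed
  have "U r \<theta> (1 / real r ^ n) = (\<Sum>j<n. \<theta> (real r ^ j * (1 / real r ^ n)) / real r ^ j)"
    unfolding U_def by (rule suminf_finite) (use vanish in auto)
  also have "\<dots> = (\<Sum>j<n. real r ^ j / (real r ^ n)\<^sup>2)"
    by (rule sum.cong) (simp_all only: lessThan_iff summand)
  also have "\<dots> = (\<Sum>j<n. real r ^ j) / (real r ^ n)\<^sup>2"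
    by (rule sum_divide_distrib[symmetric])
  also have "\<dots> = (real r ^ n - 1) / ((real r - 1) * (real r ^ n)\<^sup>2)"
    using r by (subst geometric_sum) auto
  also have "\<dots> = (1 / real r ^ n - (1 / real r ^ n)\<^sup>2) / (real r - 1)"
    using r_pos by (simp add: field_simps power2_eq_square)
  finally show ?thesis .
qed

lemma delta_plus_minus_quadratic:
  fixes r :: nat
  assumes "r > 0" "0 < y" "y < 1"
    and "\<And>x. x \<in> {real_of_int k / real r ^ n, (real_of_int k + y) / real r ^ n,
                  (real_of_int k + 1) / real r ^ n} \<Longrightarrow> f x = a * x + b * x\<^sup>2 + c"
  shows "delta_plus r n k y f - delta_minus r n k y f = b / real r ^ n"
  using assms unfolding delta_plus_def delta_minus_def
  by (simp add: field_simps power2_eq_square)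

lemma delta_plus_minus_U:
  fixes r :: nat
  assumes r: "r \<ge> 2" and \<theta>: "\<theta> \<in> Cp"
    and square: "\<forall>x\<in>{0..1 / real r}. \<theta> x = x\<^sup>2"
  shows "delta_plus r n 0 (1 / real r) (U r \<theta>) - delta_minus r n 0 (1 / real r) (U r \<theta>)
           = - 1 / (real r - 1) / real r ^ n"
proof (rule delta_plus_minus_quadratic)
  fix x
  assume "x \<in> {real_of_int 0 / real r ^ n, (real_of_int 0 + 1 / real r) / real r ^ n,
                (real_of_int 0 + 1) / real r ^ n}"
  then consider "x = 0" | m where "x = 1 / real r ^ m"
    by (auto simp flip: power_Suc)
  then show "U r \<theta> x = 1 / (real r - 1) * x + - 1 / (real r - 1) * x\<^sup>2 + 0"
  proof cases
    case 1
    then show ?thesis using \<theta> by (simp add: U_def Cp_def)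
  next
    case 2
    then show ?thesis using U_inverse_power[OF r \<theta> square] by (simp add: diff_divide_distrib)
  qed
qed (use r in auto)

theorem theorem3p9:
  fixes r :: nat and \<theta> :: "real \<Rightarrow> real"
  assumes "r \<ge> 2"
    and "\<theta> \<in> Cp"
    and "\<forall>x\<in>{0..1 / real r}. \<theta> x = x\<^sup>2"
    and "\<exists>\<theta>' \<theta>''. (\<forall>x. (\<theta> has_real_derivative \<theta>' x) (at x))
                  \<and> (\<forall>x. (\<theta>' has_real_derivative \<theta>'' x) (at x))
                  \<and> continuous_on UNIV \<theta>''"
    and "\<forall>x\<in>{0<..<1}. \<theta> x > 0"
  shows "(\<forall>n. Delta r n 0 (1 / real r) (U r \<theta>) = - 2 / (real r - 1))
         \<and> U r \<theta> \<notin> P r"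
proof
  note second_difference = delta_plus_minus_U[OF assms(1-3)]
  have r: "real r > 1" using assms(1) by simp
  show "\<forall>n. Delta r n 0 (1 / real r) (U r \<theta>) = - 2 / (real r - 1)"
    using r by (simp add: Delta_def second_difference)
  show "U r \<theta> \<notin> P r"
  proof
    assume "U r \<theta> \<in> P r"
    then obtain c where c: "c > 0" "U r \<theta> \<in> Pc r c" by (auto simp: P_def)
    obtain n where n: "(1 / real r) ^ n < c * (real r - 1)"
      using real_arch_pow_inv[of "c * (real r - 1)" "1 / real r"] c(1) r by auto
    have "delta_plus r n 0 (1 / real r) (U r \<theta>) - delta_minus r n 0 (1 / real r) (U r \<theta>) \<le> - c"
      using c(2) r unfolding Pc_def by auto
    then have "- 1 / (real r - 1) / real r ^ n \<le> - c"
      by (simp only: second_difference)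
    with n r show False by (simp add: field_simps)
  qed
qed

end
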